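(* Let $G$ be a group and $L,N$ normal subgroups with $L\geqslant N$; let $i\colon N\hookrightarrow L$ be the inclusion. Assume $\mathrm{H}^1(L/N)=\mathrm{Q}(L/N)$ and $\mathrm{H}^2_b(L/N)^G=0$. Then $\mathrm{H}^1(N)^G\cap i^*\mathrm{Q}(L)^G=i^*\mathrm{H}^1(L)^G$. In particular, this equality holds whenever $L/N$ is boundedly $2$-acyclic.
   Context: $\mathrm{Q}(H)$: homogeneous quasimorphisms on a group $H$; $\mathrm{H}^1(H)$: homomorphisms $H\to\mathbb{R}$. $\mathrm{Q}(L)^G$, $\mathrm{H}^1(L)^G$, $\mathrm{H}^1(N)^G$: the elements invariant under conjugation by $G$. $i^*$ denotes restriction to $N$. $\mathrm{H}^2_b$ is second bounded cohomology with trivial real coefficients; $G$ acts on $L/N$ by conjugation, hence on $\mathrm{H}^2_b(L/N)$, and $\mathrm{H}^2_b(L/N)^G$ is the invariant part. A group $\Lambda$ is boundedly $n$-acyclic if $\mathrm{H}^k_b(\Lambda)=0$ for $1\le k\le n$. *)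

theory Defs
  imports "HOL-Algebra.Algebra"
begin

definition hom_quasimorphisms :: "('a, 'm) monoid_scheme \<Rightarrow> ('a \<Rightarrow> real) set" ("Qm") where
  "Qm H = {f. f \<in> extensional (carrier H)
            \<and> (\<exists>D. \<forall>x\<in>carrier H. \<forall>y\<in>carrier H. \<bar>f (x \<otimes>\<^bsub>H\<^esub> y) - f x - f y\<bar> \<le> D)
            \<and> (\<forall>x\<in>carrier H. \<forall>n::int. f (x [^]\<^bsub>H\<^esub> n) = of_int n * f x)}"

definition real_homs :: "('a, 'm) monoid_scheme \<Rightarrow> ('a \<Rightarrow> real) set" ("H1") where
  "H1 H = {f. f \<in> extensional (carrier H)
            \<and> (\<forall>x\<in>carrier H. \<forall>y\<in>carrier H. f (x \<otimes>\<^bsub>H\<^esub> y) = f x + f y)}"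

definition conj_invariant :: "('a, 'm) monoid_scheme \<Rightarrow> 'a set \<Rightarrow> ('a \<Rightarrow> real) \<Rightarrow> bool" where
  "conj_invariant G S f \<longleftrightarrow>
     (\<forall>g\<in>carrier G. \<forall>x\<in>S. f (g \<otimes>\<^bsub>G\<^esub> x \<otimes>\<^bsub>G\<^esub> inv\<^bsub>G\<^esub> g) = f x)"

definition chain_dom :: "('a, 'm) monoid_scheme \<Rightarrow> nat \<Rightarrow> 'a list set" where
  "chain_dom H n = {xs. length xs = n \<and> set xs \<subseteq> carrier H}"

definition bounded_cochain :: "('a, 'm) monoid_scheme \<Rightarrow> nat \<Rightarrow> ('a list \<Rightarrow> real) \<Rightarrow> bool" where
  "bounded_cochain H n c \<longleftrightarrow> (\<exists>B. \<forall>xs\<in>chain_dom H n. \<bar>c xs\<bar> \<le> B)"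

text \<open>Standard inhomogeneous coboundary; applied to a list of length n+1:
  (dc)(x0,...,xn) = c(x1,...,xn) + sum_{i=1}^{n} (-1)^i c(x0,...,x(i-1)xi,...,xn)
                    + (-1)^(n+1) c(x0,...,x(n-1)).\<close>

definition coboundary :: "('a, 'm) monoid_scheme \<Rightarrow> nat \<Rightarrow> ('a list \<Rightarrow> real) \<Rightarrow> 'a list \<Rightarrow> real" where
  "coboundary H n c xs =
     c (tl xs)
     + (\<Sum>i<n. (-1) ^ (i + 1) * c (take i xs @ [xs ! i \<otimes>\<^bsub>H\<^esub> xs ! (i + 1)] @ drop (i + 2) xs))
     + (-1) ^ (n + 1) * c (butlast xs)"

definition bounded_cocycle :: "('a, 'm) monoid_scheme \<Rightarrow> nat \<Rightarrow> ('a list \<Rightarrow> real) \<Rightarrow> bool" where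
  "bounded_cocycle H n c \<longleftrightarrow> bounded_cochain H n c \<and>
     (\<forall>xs\<in>chain_dom H (Suc n). coboundary H n c xs = 0)"

definition bounded_coboundary :: "('a, 'm) monoid_scheme \<Rightarrow> nat \<Rightarrow> ('a list \<Rightarrow> real) \<Rightarrow> bool" where
  "bounded_coboundary H n c \<longleftrightarrow>
     (\<exists>b. bounded_cochain H (n - 1) b \<and> (\<forall>xs\<in>chain_dom H n. c xs = coboundary H (n - 1) b xs))"

definition Hb_vanishes :: "('a, 'm) monoid_scheme \<Rightarrow> nat \<Rightarrow> bool" where
  "Hb_vanishes H n \<longleftrightarrow> (\<forall>c. bounded_cocycle H n c \<longrightarrow> bounded_coboundary H n c)"

definition boundedly_acyclic :: "('a, 'm) monoid_scheme \<Rightarrow> nat \<Rightarrow> bool" where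
  "boundedly_acyclic H n \<longleftrightarrow> (\<forall>k. 1 \<le> k \<and> k \<le> n \<longrightarrow> Hb_vanishes H k)"

text \<open>H^n_b(H)^A = 0 where A acts on H by the maps alpha g (by automorphisms):
every bounded cocycle whose class is invariant under all alpha g is a bounded
coboundary. The action on cochains is (g.c)(x1,...,xn) = c(alpha g x1,...,alpha g xn).\<close>

definition Hb_inv_vanishes ::
  "('b, 'm) monoid_scheme \<Rightarrow> 'g set \<Rightarrow> ('g \<Rightarrow> 'b \<Rightarrow> 'b) \<Rightarrow> nat \<Rightarrow> bool" where
  "Hb_inv_vanishes H A alpha n \<longleftrightarrow>
     (\<forall>c. bounded_cocycle H n c
          \<and> (\<forall>g\<in>A. bounded_coboundary H n (\<lambda>xs. c (map (alpha g) xs) - c xs))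
          \<longrightarrow> bounded_coboundary H n c)"

text \<open>Conjugation action of G on the coset space L/N (N normal in G):
  g . (xN) = g x N g^{-1} = (g x g^{-1}) N.\<close>

definition coset_conj :: "('a, 'm) monoid_scheme \<Rightarrow> 'a \<Rightarrow> 'a set \<Rightarrow> 'a set" where
  "coset_conj G g S = (\<lambda>y. g \<otimes>\<^bsub>G\<^esub> y \<otimes>\<^bsub>G\<^esub> inv\<^bsub>G\<^esub> g) ` S"

end

theory Submission
  imports Defs
begin

text \<open>Let \<phi> be a G-invariant homogeneous quasimorphism on L whose restriction to N is a
homomorphism. Homogeneity upgrades additivity on N to \<phi>(x n) = \<phi> x + \<phi> n for x \<in> L and
n \<in> N, since (x n)^k = x^k m with m \<in> N and \<phi> m = k \<phi> n. Hence the defect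
\<phi>(x y) - \<phi> x - \<phi> y only depends on the cosets x N and y N: it is a bounded 2-cocycle on L/N
whose class is G-invariant, so it is the coboundary of a bounded function \<beta> on L/N. Then
\<phi> + \<beta> is a homomorphism on L extending the restriction of \<phi> to N, and it is G-invariant
because \<beta>(g x g^-1) - \<beta> x is a bounded homomorphism of x, hence zero.\<close>

lemma nat_multiples_bounded_imp_zero:
  fixes a B :: real
  assumes "\<And>k::nat. real k * \<bar>a\<bar> \<le> B"
  shows "a = 0"
proof (rule ccontr)
  assume "a \<noteq> 0"
  then obtain k where "B < real k * \<bar>a\<bar>"
    using ex_less_of_nat_mult[of "\<bar>a\<bar>" B] by auto
  with assms[of k] show False by simp
qed

lemma (in group) mult_inv_cancel_left:
  "x \<in> carrier G \<Longrightarrow> y \<in> carrier G \<Longrightarrow> x \<otimes> (inv x \<otimes> y) = y"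
  by (simp add: m_assoc[symmetric])

lemma (in group) inv_mult_cancel_left:
  "x \<in> carrier G \<Longrightarrow> y \<in> carrier G \<Longrightarrow> inv x \<otimes> (x \<otimes> y) = y"
  by (simp add: m_assoc[symmetric])

lemma (in group) additive_nat_pow:
  fixes h :: "'a \<Rightarrow> real"
  assumes add: "\<And>x y. x \<in> carrier G \<Longrightarrow> y \<in> carrier G \<Longrightarrow> h (x \<otimes> y) = h x + h y"
    and x: "x \<in> carrier G"
  shows "h (x [^] k) = real k * h x"
proof (induction k)
  case 0
  show ?case using add[of \<one> \<one>] by simp
next
  case (Suc k)
  then show ?case using add[of "x [^] k" x] x by (simp add: algebra_simps)
qed

lemma (in group) bounded_additive_eq_zero:
  fixes h :: "'a \<Rightarrow> real"
  assumes add: "\<And>x y. x \<in> carrier G \<Longrightarrow> y \<in> carrier G \<Longrightarrow> h (x \<otimes> y) = h x + h y"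
    and bounded: "\<And>x. x \<in> carrier G \<Longrightarrow> \<bar>h x\<bar> \<le> B"
    and x: "x \<in> carrier G"
  shows "h x = 0"
proof (rule nat_multiples_bounded_imp_zero)
  fix k :: nat
  show "real k * \<bar>h x\<bar> \<le> B"
    using bounded[of "x [^] k"] additive_nat_pow[OF add x, of k] x by (simp add: abs_mult)
qed

lemma (in group) real_homs_subset_Qm: "H1 G \<subseteq> Qm G"
proof
  fix f assume "f \<in> H1 G"
  then have ext: "f \<in> extensional (carrier G)"
    and add: "\<And>x y. x \<in> carrier G \<Longrightarrow> y \<in> carrier G \<Longrightarrow> f (x \<otimes> y) = f x + f y"
    by (auto simp: real_homs_def)
  have f_inv: "f (inv x) = - f x" if "x \<in> carrier G" for x
    using add[of x "inv x"] add[of \<one> \<one>] that by simp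
  have "f (x [^] n) = of_int n * f x" if x: "x \<in> carrier G" for x and n :: int
  proof (cases n rule: int_cases)
    case (nonneg m)
    then show ?thesis using additive_nat_pow[OF add x, of m] by (simp add: int_pow_int)
  next
    case (neg m)
    then show ?thesis
      using additive_nat_pow[OF add x, of "Suc m"] f_inv x by (simp add: int_pow_neg_int del: of_nat_Suc)
  qed
  then show "f \<in> Qm G"
    unfolding hom_quasimorphisms_def using ext add by (auto intro: exI[of _ 0])
qed

lemma coboundary_1: "coboundary H (Suc 0) b [x, y] = b [y] - b [x \<otimes>\<^bsub>H\<^esub> y] + b [x]"
  by (simp add: coboundary_def)

lemma coboundary_2:
  "coboundary H 2 c [x, y, z] = c [y, z] - c [x \<otimes>\<^bsub>H\<^esub> y, z] + c [x, y \<otimes>\<^bsub>H\<^esub> z] - c [x, y]"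
  by (simp add: coboundary_def numeral_2_eq_2)

lemma chain_dom_2E:
  assumes "xs \<in> chain_dom H 2"
  obtains x y where "x \<in> carrier H" "y \<in> carrier H" "xs = [x, y]"
  using assms by (auto simp: chain_dom_def numeral_2_eq_2 length_Suc_conv)

lemma chain_dom_3E:
  assumes "xs \<in> chain_dom H 3"
  obtains x y z where "x \<in> carrier H" "y \<in> carrier H" "z \<in> carrier H" "xs = [x, y, z]"
  using assms by (auto simp: chain_dom_def numeral_3_eq_3 length_Suc_conv)

lemma boundedly_acyclic_imp_Hb_inv_vanishes:
  "boundedly_acyclic H n \<Longrightarrow> 1 \<le> k \<Longrightarrow> k \<le> n \<Longrightarrow> Hb_inv_vanishes H A \<alpha> k"
  by (simp add: boundedly_acyclic_def Hb_vanishes_def Hb_inv_vanishes_def)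

locale nested_normal_subgroups = group +
  fixes L N :: "'a set"
  assumes L_normal: "L \<lhd> G" and N_normal: "N \<lhd> G" and N_subset_L: "N \<subseteq> L"
begin

sublocale L: normal L G by (rule L_normal)
sublocale N: normal N G by (rule N_normal)

abbreviation "L_mod_N \<equiv> G\<lparr>carrier := L\<rparr> Mod N"

lemma nat_pow_in_L: "x \<in> L \<Longrightarrow> x [^] (k::nat) \<in> L"
  by (induction k) auto

lemma carrier_L_mod_N: "U \<in> carrier L_mod_N \<longleftrightarrow> (\<exists>x\<in>L. U = N #> x)"
  by (auto simp: FactGroup_def RCOSETS_def r_coset_def)

lemma some_elem_rcos:
  assumes "x \<in> carrier G"
  shows "\<exists>n\<in>N. (SOME z. z \<in> N #> x) = n \<otimes> x"
proof -
  have "x \<in> N #> x"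
    using assms by (auto intro: rcos_self N.subgroup_axioms)
  then have "(SOME z. z \<in> N #> x) \<in> N #> x"
    by (rule someI)
  then show ?thesis
    by (auto simp: r_coset_def)
qed

lemma chain_dom_L_mod_N_2E:
  assumes "Us \<in> chain_dom L_mod_N 2"
  obtains x y where "x \<in> L" "y \<in> L" "Us = [N #> x, N #> y]"
  using assms by (elim chain_dom_2E) (auto simp: carrier_L_mod_N)

lemma chain_dom_L_mod_N_3E:
  assumes "Us \<in> chain_dom L_mod_N 3"
  obtains x y z where "x \<in> L" "y \<in> L" "z \<in> L" "Us = [N #> x, N #> y, N #> z]"
  using assms by (elim chain_dom_3E) (auto simp: carrier_L_mod_N)

lemma coset_conj_rcos:
  assumes g: "g \<in> carrier G" and x: "x \<in> carrier G"
  shows "coset_conj G g (N #> x) = N #> (g \<otimes> x \<otimes> inv g)"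
proof -
  have "coset_conj G g (N #> x) = (g <# (N #> x)) #> inv g"
    by (auto simp: coset_conj_def l_coset_def r_coset_def)
  also have "\<dots> = ((N #> g) #> x) #> inv g"
    using coset_assoc[OF g x N.subset] N.coset_eq g by simp
  also have "\<dots> = N #> (g \<otimes> x \<otimes> inv g)"
    using g x by (simp add: coset_mult_assoc N.subset r_coset_subset_G)
  finally show ?thesis .
qed

end

locale quasimorphism_additive_on_normal = nested_normal_subgroups +
  fixes \<phi> :: "'a \<Rightarrow> real"
  assumes quasimorphism: "\<phi> \<in> Qm (G\<lparr>carrier := L\<rparr>)"
    and invariant: "conj_invariant G L \<phi>"
    and additive_on_N: "\<And>x y. x \<in> N \<Longrightarrow> y \<in> N \<Longrightarrow> \<phi> (x \<otimes> y) = \<phi> x + \<phi> y"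
begin

definition defect :: "'a \<Rightarrow> 'a \<Rightarrow> real"
  where "defect x y = \<phi> (x \<otimes> y) - \<phi> x - \<phi> y"

lemma defect_bounded: "\<exists>B. \<forall>x\<in>L. \<forall>y\<in>L. \<bar>defect x y\<bar> \<le> B"
  using quasimorphism by (simp add: hom_quasimorphisms_def defect_def)

lemma nat_pow_quasimorphism:
  assumes "x \<in> L"
  shows "\<phi> (x [^] k) = real k * \<phi> x"
proof -
  have "\<phi> (x [^]\<^bsub>G\<lparr>carrier := L\<rparr>\<^esub> int k) = real k * \<phi> x"
    using quasimorphism assms by (simp add: hom_quasimorphisms_def)
  then show ?thesis by (simp add: int_pow_int nat_pow_consistent[symmetric])
qed

lemma quasimorphism_one: "\<phi> \<one> = 0"
  using nat_pow_quasimorphism[OF L.one_closed, of 0] by simp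

lemma quasimorphism_conj: "g \<in> carrier G \<Longrightarrow> x \<in> L \<Longrightarrow> \<phi> (g \<otimes> x \<otimes> inv g) = \<phi> x"
  using invariant by (simp add: conj_invariant_def)

lemma quasimorphism_conj_inv: "g \<in> carrier G \<Longrightarrow> x \<in> L \<Longrightarrow> \<phi> (inv g \<otimes> x \<otimes> g) = \<phi> x"
  using quasimorphism_conj[of "inv g" x] by simp

lemma pow_mult_normal:
  assumes x: "x \<in> L" and n: "n \<in> N"
  shows "\<exists>m\<in>N. (x \<otimes> n) [^] k = x [^] k \<otimes> m \<and> \<phi> m = real k * \<phi> n"
proof (induction k)
  case 0
  show ?case using N.one_closed quasimorphism_one by force
next
  case (Suc k)
  then obtain m where m: "m \<in> N" "(x \<otimes> n) [^] k = x [^] k \<otimes> m" "\<phi> m = real k * \<phi> n"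
    by blast
  have xG: "x \<in> carrier G" and nG: "n \<in> carrier G" and mG: "m \<in> carrier G"
    using x n m(1) by auto
  define m' where "m' = inv x \<otimes> m \<otimes> x \<otimes> n"
  have conj_m: "inv x \<otimes> m \<otimes> x \<in> N"
    using N.inv_op_closed1[OF xG m(1)] .
  then have m'_in_N: "m' \<in> N"
    using n by (simp add: m'_def)
  have "x \<otimes> m' = m \<otimes> (x \<otimes> n)"
    using xG nG mG by (simp add: m'_def m_assoc[symmetric])
  then have "(x \<otimes> n) [^] Suc k = x [^] Suc k \<otimes> m'"
    using m(2) xG nG mG m'_in_N by (simp add: m_assoc)
  moreover have "\<phi> m' = real (Suc k) * \<phi> n"
    using additive_on_N[OF conj_m n] quasimorphism_conj_inv[OF xG] m N_subset_L
    by (auto simp: m'_def algebra_simps)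
  ultimately show ?case using m'_in_N by blast
qed

lemma quasimorphism_mult_normal_right:
  assumes x: "x \<in> L" and n: "n \<in> N"
  shows "\<phi> (x \<otimes> n) = \<phi> x + \<phi> n"
proof -
  obtain B where B: "\<And>x y. x \<in> L \<Longrightarrow> y \<in> L \<Longrightarrow> \<bar>defect x y\<bar> \<le> B"
    using defect_bounded by blast
  have "real k * \<bar>\<phi> (x \<otimes> n) - \<phi> x - \<phi> n\<bar> \<le> B" for k
  proof -
    obtain m where m: "m \<in> N" "(x \<otimes> n) [^] k = x [^] k \<otimes> m" "\<phi> m = real k * \<phi> n"
      using pow_mult_normal[OF x n] by blast
    have "\<phi> ((x \<otimes> n) [^] k) = real k * \<phi> (x \<otimes> n)"
      using x n N_subset_L by (intro nat_pow_quasimorphism) auto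
    then have "defect (x [^] k) m = real k * (\<phi> (x \<otimes> n) - \<phi> x - \<phi> n)"
      using m x by (simp add: defect_def nat_pow_quasimorphism algebra_simps)
    then show ?thesis
      using B[OF nat_pow_in_L[OF x, of k] N_subset_L[THEN subsetD, OF m(1)]] by (simp add: abs_mult)
  qed
  then show ?thesis
    using nat_multiples_bounded_imp_zero by fastforce
qed

lemma quasimorphism_mult_normal_left:
  assumes x: "x \<in> L" and n: "n \<in> N"
  shows "\<phi> (n \<otimes> x) = \<phi> n + \<phi> x"
proof -
  have xG: "x \<in> carrier G" and nG: "n \<in> carrier G"
    using x n by auto
  have conj_n: "inv x \<otimes> n \<otimes> x \<in> N"
    using N.inv_op_closed1[OF xG n] .
  have "n \<otimes> x = x \<otimes> (inv x \<otimes> n \<otimes> x)"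
    using xG nG by (simp add: m_assoc[symmetric])
  then show ?thesis
    using quasimorphism_mult_normal_right[OF x conj_n] quasimorphism_conj_inv[OF xG] n N_subset_L
    by auto
qed

lemma defect_mult_normal:
  assumes x: "x \<in> L" and y: "y \<in> L" and n: "n \<in> N" and n': "n' \<in> N"
  shows "defect (n \<otimes> x) (n' \<otimes> y) = defect x y"
proof -
  have xG: "x \<in> carrier G" and yG: "y \<in> carrier G" and nG: "n \<in> carrier G"
    and n'G: "n' \<in> carrier G"
    using x y n n' by auto
  have conj_n': "inv y \<otimes> n' \<otimes> y \<in> N"
    using N.inv_op_closed1[OF yG n'] .
  have "n \<otimes> x \<otimes> (n' \<otimes> y) = n \<otimes> ((x \<otimes> y) \<otimes> (inv y \<otimes> n' \<otimes> y))"
    using xG yG nG n'G by (simp add: m_assoc mult_inv_cancel_left)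
  moreover have "\<phi> (n \<otimes> ((x \<otimes> y) \<otimes> (inv y \<otimes> n' \<otimes> y))) = \<phi> n + \<phi> (x \<otimes> y) + \<phi> n'"
    using quasimorphism_mult_normal_left quasimorphism_mult_normal_right conj_n' x y n n'
      quasimorphism_conj_inv[OF yG] N_subset_L by auto
  ultimately show ?thesis
    using quasimorphism_mult_normal_left x y n n' by (simp add: defect_def)
qed

lemma defect_conj:
  assumes g: "g \<in> carrier G" and x: "x \<in> L" and y: "y \<in> L"
  shows "defect (g \<otimes> x \<otimes> inv g) (g \<otimes> y \<otimes> inv g) = defect x y"
proof -
  have "g \<otimes> x \<otimes> inv g \<otimes> (g \<otimes> y \<otimes> inv g) = g \<otimes> (x \<otimes> y) \<otimes> inv g"
    using g x y by (simp add: m_assoc inv_mult_cancel_left)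
  then show ?thesis
    using quasimorphism_conj g x y by (simp add: defect_def)
qed

lemma defect_cocycle:
  "x \<in> L \<Longrightarrow> y \<in> L \<Longrightarrow> z \<in> L \<Longrightarrow>
    defect y z - defect (x \<otimes> y) z + defect x (y \<otimes> z) - defect x y = 0"
  by (simp add: defect_def m_assoc)

text \<open>The coset representatives chosen by SOME are irrelevant, by \<open>defect_mult_normal\<close>.\<close>

definition defect_cochain :: "'a set list \<Rightarrow> real"
  where "defect_cochain Us = defect (SOME x. x \<in> Us ! 0) (SOME y. y \<in> Us ! 1)"

lemma defect_cochain_rcos:
  assumes "x \<in> L" "y \<in> L"
  shows "defect_cochain [N #> x, N #> y] = defect x y"
  using some_elem_rcos[of x] some_elem_rcos[of y] defect_mult_normal assms
  by (auto simp: defect_cochain_def)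

lemma defect_cochain_bounded_cocycle: "bounded_cocycle L_mod_N 2 defect_cochain"
  unfolding bounded_cocycle_def
proof
  obtain B where B: "\<forall>x\<in>L. \<forall>y\<in>L. \<bar>defect x y\<bar> \<le> B"
    using defect_bounded by blast
  show "bounded_cochain L_mod_N 2 defect_cochain"
    unfolding bounded_cochain_def
  proof (intro exI ballI)
    fix Us assume "Us \<in> chain_dom L_mod_N 2"
    then show "\<bar>defect_cochain Us\<bar> \<le> B"
      by (rule chain_dom_L_mod_N_2E) (simp add: B defect_cochain_rcos)
  qed
  show "\<forall>Us\<in>chain_dom L_mod_N (Suc 2). coboundary L_mod_N 2 defect_cochain Us = 0"
  proof
    fix Us assume "Us \<in> chain_dom L_mod_N (Suc 2)"
    then have "Us \<in> chain_dom L_mod_N 3"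
      by simp
    then obtain x y z where "x \<in> L" "y \<in> L" "z \<in> L" "Us = [N #> x, N #> y, N #> z]"
      by (rule chain_dom_L_mod_N_3E)
    then show "coboundary L_mod_N 2 defect_cochain Us = 0"
      by (simp add: coboundary_2 N.rcos_sum defect_cochain_rcos defect_cocycle)
  qed
qed

lemma defect_cochain_invariant_class:
  assumes g: "g \<in> carrier G"
  shows "bounded_coboundary L_mod_N 2
    (\<lambda>Us. defect_cochain (map (coset_conj G g) Us) - defect_cochain Us)"
  unfolding bounded_coboundary_def
proof (intro exI[of _ "\<lambda>_. 0"] conjI ballI)
  show "bounded_cochain L_mod_N (2 - 1) (\<lambda>_. 0)"
    by (auto simp: bounded_cochain_def)
  fix Us assume "Us \<in> chain_dom L_mod_N 2"
  then obtain x y where "x \<in> L" "y \<in> L" "Us = [N #> x, N #> y]"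
    by (rule chain_dom_L_mod_N_2E)
  then show "defect_cochain (map (coset_conj G g) Us) - defect_cochain Us
      = coboundary L_mod_N (2 - 1) (\<lambda>_. 0) Us"
    using g
    by (simp add: coset_conj_rcos L.inv_op_closed2 defect_cochain_rcos defect_conj coboundary_def)
qed

lemma obtain_bounded_primitive:
  assumes "Hb_inv_vanishes L_mod_N (carrier G) (coset_conj G) 2"
  obtains \<beta> :: "'a \<Rightarrow> real" and B
  where "\<And>x. x \<in> L \<Longrightarrow> \<bar>\<beta> x\<bar> \<le> B"
    and "\<And>x y. x \<in> L \<Longrightarrow> y \<in> L \<Longrightarrow> defect x y = \<beta> x + \<beta> y - \<beta> (x \<otimes> y)"
    and "\<And>n. n \<in> N \<Longrightarrow> \<beta> n = 0"
proof -
  have "bounded_coboundary L_mod_N 2 defect_cochain"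
    using assms defect_cochain_bounded_cocycle defect_cochain_invariant_class
    unfolding Hb_inv_vanishes_def by blast
  then obtain b where b_bounded: "bounded_cochain L_mod_N 1 b"
    and b_primitive: "\<forall>Us\<in>chain_dom L_mod_N 2. defect_cochain Us = coboundary L_mod_N 1 b Us"
    unfolding bounded_coboundary_def by auto
  define \<beta> where "\<beta> x = b [N #> x]" for x
  have "[N #> x] \<in> chain_dom L_mod_N 1" if "x \<in> L" for x
    using that by (auto simp: chain_dom_def carrier_L_mod_N)
  then obtain B where bounded: "\<And>x. x \<in> L \<Longrightarrow> \<bar>\<beta> x\<bar> \<le> B"
    using b_bounded by (auto simp: bounded_cochain_def \<beta>_def)
  have primitive: "defect x y = \<beta> x + \<beta> y - \<beta> (x \<otimes> y)" if "x \<in> L" "y \<in> L" for x y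
  proof -
    have "[N #> x, N #> y] \<in> chain_dom L_mod_N 2"
      using that by (auto simp: chain_dom_def carrier_L_mod_N)
    then have "defect_cochain [N #> x, N #> y] = coboundary L_mod_N 1 b [N #> x, N #> y]"
      using b_primitive by blast
    then show ?thesis
      using that by (simp add: defect_cochain_rcos coboundary_1 N.rcos_sum \<beta>_def)
  qed
  have "\<beta> n = 0" if "n \<in> N" for n
  proof -
    have "N #> n = N #> \<one>"
      using that by (simp add: coset_join2 N.subgroup_axioms)
    then show ?thesis
      using primitive[OF L.one_closed L.one_closed] quasimorphism_one
      by (simp add: \<beta>_def defect_def)
  qed
  with bounded primitive show ?thesis using that by blast
qed

lemma bounded_primitive_conj:
  fixes \<beta> :: "'a \<Rightarrow> real"
  assumes bounded: "\<And>x. x \<in> L \<Longrightarrow> \<bar>\<beta> x\<bar> \<le> B"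
    and primitive: "\<And>x y. x \<in> L \<Longrightarrow> y \<in> L \<Longrightarrow> defect x y = \<beta> x + \<beta> y - \<beta> (x \<otimes> y)"
    and g: "g \<in> carrier G" and x: "x \<in> L"
  shows "\<beta> (g \<otimes> x \<otimes> inv g) = \<beta> x"
proof -
  interpret Lg: group "G\<lparr>carrier := L\<rparr>"
    by (rule subgroup_imp_group[OF L.subgroup_axioms])
  define h where "h x = \<beta> (g \<otimes> x \<otimes> inv g) - \<beta> x" for x
  have h_additive: "h (x \<otimes> y) = h x + h y" if "x \<in> L" "y \<in> L" for x y
  proof -
    have "g \<otimes> x \<otimes> inv g \<otimes> (g \<otimes> y \<otimes> inv g) = g \<otimes> (x \<otimes> y) \<otimes> inv g"
      using g that by (simp add: m_assoc inv_mult_cancel_left)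
    then show ?thesis
      using primitive[OF that] defect_conj[OF g that]
        primitive[OF L.inv_op_closed2[OF g that(1)] L.inv_op_closed2[OF g that(2)]]
      by (simp add: h_def)
  qed
  have h_bounded: "\<bar>h x\<bar> \<le> 2 * B" if "x \<in> L" for x
    using bounded[OF that] bounded[OF L.inv_op_closed2[OF g that]] by (simp add: h_def)
  have "h x = 0"
    by (rule Lg.bounded_additive_eq_zero[of h "2 * B"]) (use h_additive h_bounded x in auto)
  then show ?thesis
    by (simp add: h_def)
qed

lemma exists_invariant_hom_extension:
  assumes "Hb_inv_vanishes L_mod_N (carrier G) (coset_conj G) 2"
  shows "\<exists>\<psi>\<in>H1 (G\<lparr>carrier := L\<rparr>). conj_invariant G L \<psi> \<and> (\<forall>n\<in>N. \<psi> n = \<phi> n)"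
proof -
  obtain \<beta> B where bounded: "\<And>x. x \<in> L \<Longrightarrow> \<bar>\<beta> x\<bar> \<le> B"
    and primitive: "\<And>x y. x \<in> L \<Longrightarrow> y \<in> L \<Longrightarrow> defect x y = \<beta> x + \<beta> y - \<beta> (x \<otimes> y)"
    and vanishes_on_N: "\<And>n. n \<in> N \<Longrightarrow> \<beta> n = 0"
    using obtain_bounded_primitive[OF assms] by blast
  define \<psi> where "\<psi> = restrict (\<lambda>x. \<phi> x + \<beta> x) L"
  have "\<psi> (x \<otimes> y) = \<psi> x + \<psi> y" if "x \<in> L" "y \<in> L" for x y
    using primitive[OF that] that by (simp add: \<psi>_def defect_def)
  then have "\<psi> \<in> H1 (G\<lparr>carrier := L\<rparr>)"
    by (simp add: real_homs_def \<psi>_def)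
  moreover have "conj_invariant G L \<psi>"
    using bounded_primitive_conj[OF bounded primitive] quasimorphism_conj L.inv_op_closed2
    by (simp add: conj_invariant_def \<psi>_def)
  moreover have "\<forall>n\<in>N. \<psi> n = \<phi> n"
    using vanishes_on_N N_subset_L by (auto simp: \<psi>_def)
  ultimately show ?thesis by blast
qed

end

context nested_normal_subgroups
begin

lemma restrict_invariant_real_hom:
  assumes "\<psi> \<in> H1 (G\<lparr>carrier := L\<rparr>)" and "conj_invariant G L \<psi>"
  shows "restrict \<psi> N \<in> H1 (G\<lparr>carrier := N\<rparr>)" and "conj_invariant G N (restrict \<psi> N)"
  using assms N_subset_L N.inv_op_closed2 by (auto simp: real_homs_def conj_invariant_def subset_iff)

lemma restrict_invariant_real_homs_eq:
  assumes "Hb_inv_vanishes L_mod_N (carrier G) (coset_conj G) 2"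
  shows "{f \<in> H1 (G\<lparr>carrier := N\<rparr>). conj_invariant G N f}
      \<inter> (\<lambda>f. restrict f N) ` {f \<in> Qm (G\<lparr>carrier := L\<rparr>). conj_invariant G L f}
    = (\<lambda>f. restrict f N) ` {f \<in> H1 (G\<lparr>carrier := L\<rparr>). conj_invariant G L f}"
    (is "?A \<inter> ?B = ?C")
proof
  show "?A \<inter> ?B \<subseteq> ?C"
  proof
    fix f assume "f \<in> ?A \<inter> ?B"
    then obtain \<phi> where f_hom: "f \<in> H1 (G\<lparr>carrier := N\<rparr>)"
      and \<phi>: "\<phi> \<in> Qm (G\<lparr>carrier := L\<rparr>)" "conj_invariant G L \<phi>" and f: "f = restrict \<phi> N"
      by blast
    have "\<phi> (x \<otimes> y) = \<phi> x + \<phi> y" if "x \<in> N" "y \<in> N" for x y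
      using f_hom that by (simp add: real_homs_def f)
    with \<phi> interpret quasimorphism_additive_on_normal G L N \<phi>
      by unfold_locales
    obtain \<psi> where \<psi>: "\<psi> \<in> H1 (G\<lparr>carrier := L\<rparr>)" "conj_invariant G L \<psi>" and "\<forall>n\<in>N. \<psi> n = \<phi> n"
      using exists_invariant_hom_extension[OF assms] by blast
    then have "f = restrict \<psi> N"
      by (auto simp: f intro: restrict_ext)
    with \<psi> show "f \<in> ?C" by blast
  qed
  show "?C \<subseteq> ?A \<inter> ?B"
  proof
    fix f assume "f \<in> ?C"
    then obtain \<psi> where \<psi>: "\<psi> \<in> H1 (G\<lparr>carrier := L\<rparr>)" "conj_invariant G L \<psi>" and f: "f = restrict \<psi> N"
      by blast
    have "\<psi> \<in> Qm (G\<lparr>carrier := L\<rparr>)"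
      using group.real_homs_subset_Qm[OF subgroup_imp_group[OF L.subgroup_axioms]] \<psi>(1) by blast
    with \<psi> f restrict_invariant_real_hom[OF \<psi>] show "f \<in> ?A \<inter> ?B" by blast
  qed
qed

end

theorem proposition5p8:
  fixes G :: "('a, 'm) monoid_scheme" and L N :: "'a set"
  assumes "group G" and "L \<lhd> G" and "N \<lhd> G" and "N \<subseteq> L"
  shows "(H1 (G\<lparr>carrier := L\<rparr> Mod N) = Qm (G\<lparr>carrier := L\<rparr> Mod N)
          \<and> Hb_inv_vanishes (G\<lparr>carrier := L\<rparr> Mod N) (carrier G) (coset_conj G) 2
          \<longrightarrow>
          {f \<in> H1 (G\<lparr>carrier := N\<rparr>). conj_invariant G N f}
            \<inter> (\<lambda>f. restrict f N) ` {f \<in> Qm (G\<lparr>carrier := L\<rparr>). conj_invariant G L f}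
          = (\<lambda>f. restrict f N) ` {f \<in> H1 (G\<lparr>carrier := L\<rparr>). conj_invariant G L f})
       \<and> (boundedly_acyclic (G\<lparr>carrier := L\<rparr> Mod N) 2
          \<longrightarrow>
          {f \<in> H1 (G\<lparr>carrier := N\<rparr>). conj_invariant G N f}
            \<inter> (\<lambda>f. restrict f N) ` {f \<in> Qm (G\<lparr>carrier := L\<rparr>). conj_invariant G L f}
          = (\<lambda>f. restrict f N) ` {f \<in> H1 (G\<lparr>carrier := L\<rparr>). conj_invariant G L f})"
proof -
  interpret nested_normal_subgroups G L N
    using assms by (simp add: nested_normal_subgroups_def nested_normal_subgroups_axioms_def)
  have "boundedly_acyclic L_mod_N 2 \<Longrightarrow> Hb_inv_vanishes L_mod_N (carrier G) (coset_conj G) 2"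
    by (simp add: boundedly_acyclic_imp_Hb_inv_vanishes)
  then show ?thesis
    using restrict_invariant_real_homs_eq by blast
qed

end
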